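(* Let $G$ be a star-like block graph on $n$ vertices with blocks $B_1,\dots,B_t$ of orders $b_1,\dots,b_t$, and let $k$ be an integer with $2\le k\le n$. Then $$SW_k(G)=(n-1)\binom{n-1}{k-1}-\sum_{i=1}^t\binom{b_i-1}{k}.$$
   Context: A block graph is a connected graph in which every block (maximal connected induced subgraph without cut vertices) is a clique. A star-like block graph is a block graph having a universal vertex (a vertex adjacent to all other vertices). For $S\subseteq V(G)$, the Steiner distance $d(S)$ is the minimum number of edges of a connected subgraph whose vertex set contains $S$, and $SW_k(G)=\sum_{|S|=k} d(S)$. Convention $\binom{m}{l}=0$ for $m<l$. *)

theory Defs
  imports Main
begin

definition simple_graph :: "'a set \<Rightarrow> 'a set set \<Rightarrow> bool" where
  "simple_graph V E \<longleftrightarrow> finite V \<and>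
     (\<forall>e\<in>E. \<exists>u v. e = {u, v} \<and> u \<noteq> v \<and> u \<in> V \<and> v \<in> V)"

definition adj_rel :: "'a set set \<Rightarrow> ('a \<times> 'a) set" where
  "adj_rel F = {(u, v). {u, v} \<in> F \<and> u \<noteq> v}"

definition connected_graph :: "'a set \<Rightarrow> 'a set set \<Rightarrow> bool" where
  "connected_graph W F \<longleftrightarrow> W \<noteq> {} \<and>
     (\<forall>u\<in>W. \<forall>v\<in>W. (u, v) \<in> (adj_rel F)\<^sup>*)"

definition is_subgraph :: "'a set \<Rightarrow> 'a set set \<Rightarrow> 'a set \<Rightarrow> 'a set set \<Rightarrow> bool" where
  "is_subgraph W F V E \<longleftrightarrow> W \<subseteq> V \<and> F \<subseteq> E \<and> (\<forall>e\<in>F. e \<subseteq> W)"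

definition induced_edges :: "'a set set \<Rightarrow> 'a set \<Rightarrow> 'a set set" where
  "induced_edges E W = {e \<in> E. e \<subseteq> W}"

definition steiner_dist :: "'a set \<Rightarrow> 'a set set \<Rightarrow> 'a set \<Rightarrow> nat" where
  "steiner_dist V E S = Min {card F | W F. is_subgraph W F V E \<and> connected_graph W F \<and> S \<subseteq> W}"

definition steiner_wiener :: "nat \<Rightarrow> 'a set \<Rightarrow> 'a set set \<Rightarrow> nat" where
  "steiner_wiener k V E = (\<Sum>S\<in>{S. S \<subseteq> V \<and> card S = k}. steiner_dist V E S)"

definition no_cut_vertex :: "'a set set \<Rightarrow> 'a set \<Rightarrow> bool" where
  "no_cut_vertex E B \<longleftrightarrow>
     (\<forall>v\<in>B. B - {v} = {} \<or> connected_graph (B - {v}) (induced_edges E (B - {v})))"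

definition good_block_candidate :: "'a set \<Rightarrow> 'a set set \<Rightarrow> 'a set \<Rightarrow> bool" where
  "good_block_candidate V E B \<longleftrightarrow> B \<subseteq> V \<and>
     connected_graph B (induced_edges E B) \<and> no_cut_vertex E B"

definition blocks :: "'a set \<Rightarrow> 'a set set \<Rightarrow> 'a set set" where
  "blocks V E = {B. good_block_candidate V E B \<and>
     (\<forall>B'. good_block_candidate V E B' \<and> B \<subseteq> B' \<longrightarrow> B' = B)}"

definition is_clique :: "'a set set \<Rightarrow> 'a set \<Rightarrow> bool" where
  "is_clique E B \<longleftrightarrow> (\<forall>u\<in>B. \<forall>v\<in>B. u \<noteq> v \<longrightarrow> {u, v} \<in> E)"

definition block_graph :: "'a set \<Rightarrow> 'a set set \<Rightarrow> bool" where
  "block_graph V E \<longleftrightarrow> simple_graph V E \<and> connected_graph V E \<and>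
     (\<forall>B\<in>blocks V E. is_clique E B)"

definition star_like_block_graph :: "'a set \<Rightarrow> 'a set set \<Rightarrow> bool" where
  "star_like_block_graph V E \<longleftrightarrow> block_graph V E \<and>
     (\<exists>u\<in>V. \<forall>v\<in>V. v \<noteq> u \<longrightarrow> {u, v} \<in> E)"

end

theory Submission
  imports Defs
begin

text \<open>A connected subgraph containing a k-set S has at least k - 1 edges, and the star
  at the universal vertex u spanning S \<union> {u} has at most k. Every block of a star-like
  block graph contains u and two blocks meet only in u, so d(S) = k - 1 exactly when
  u \<in> S or S lies inside a block: otherwise a tree on S alone would make S \<union> {u}
  2-connected, hence contained in a block. So SW_k is (k - 1) binom(n, k) plus the number
  of k-subsets of V - {u} lying in no block, which is binom(n - 1, k) - \<Sum>i binom(b_i - 1, k).\<close>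

lemma adj_rel_empty [simp]: "adj_rel {} = {}"
  unfolding adj_rel_def by auto

lemma adj_rel_insert_edge: "a \<noteq> b \<Longrightarrow> adj_rel (insert {a, b} F) = adj_rel F \<union> {(a, b), (b, a)}"
  unfolding adj_rel_def by (auto simp: doubleton_eq_iff insert_commute)

lemma adj_rel_mono: "F \<subseteq> F' \<Longrightarrow> adj_rel F \<subseteq> adj_rel F'"
  unfolding adj_rel_def by auto

lemma connected_graph_mono: "connected_graph W F \<Longrightarrow> F \<subseteq> F' \<Longrightarrow> connected_graph W F'"
  unfolding connected_graph_def using rtrancl_mono[OF adj_rel_mono] by blast

lemma rtrancl_Un_sym_pair_reaches_endpoint:
  "(w, r) \<in> (A \<union> {(a, b), (b, a)})\<^sup>* \<Longrightarrow> (w, r) \<in> A\<^sup>* \<or> (w, a) \<in> A\<^sup>* \<or> (w, b) \<in> A\<^sup>*"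
  by (induction rule: rtrancl_induct) (auto intro: rtrancl_into_rtrancl)

lemma rtrancl_Un_sym_pair_from_endpoint:
  "(w, r) \<in> (A \<union> {(a, b), (b, a)})\<^sup>* \<Longrightarrow> (w, r) \<in> A\<^sup>* \<or> (a, r) \<in> A\<^sup>* \<or> (b, r) \<in> A\<^sup>*"
  by (induction rule: converse_rtrancl_induct) (auto intro: converse_rtrancl_into_rtrancl)

lemma simple_graph_finite_edges: "simple_graph W F \<Longrightarrow> finite F"
  unfolding simple_graph_def by (metis PowI empty_subsetI finite_Pow_iff insert_subset rev_finite_subset subsetI)

lemma simple_graph_subgraph: "simple_graph V E \<Longrightarrow> is_subgraph W F V E \<Longrightarrow> simple_graph W F"
  unfolding simple_graph_def is_subgraph_def by (metis finite_subset insert_subset subsetD)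

lemma card_vertices_le_edges_plus_roots:
  assumes "simple_graph W F" "R \<subseteq> W" "\<forall>w\<in>W. \<exists>r\<in>R. (w, r) \<in> (adj_rel F)\<^sup>*"
  shows "card W \<le> card F + card R"
  using simple_graph_finite_edges[OF assms(1)] assms
proof (induction F arbitrary: R rule: finite_induct)
  case empty
  then have "W \<subseteq> R" by auto
  with empty.prems(1,2) show ?case
    by (simp add: card_mono finite_subset simple_graph_def)
next
  case (insert e F R)
  obtain a b where e: "e = {a, b}" "a \<noteq> b" "a \<in> W" "b \<in> W"
    using insert.prems(1) unfolding simple_graph_def by blast
  have simple: "simple_graph W F"
    using insert.prems(1) unfolding simple_graph_def by blast
  have finite_R: "finite R"
    using insert.prems(1,2) finite_subset unfolding simple_graph_def by blast
  have reach: "(w, r) \<in> (adj_rel F \<union> {(a, b), (b, a)})\<^sup>*" if "(w, r) \<in> (adj_rel (insert e F))\<^sup>*" for w r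
    using that e(1,2) by (simp add: adj_rel_insert_edge)
  \<comment> \<open>Deleting the edge splits at most one component, so one extra root suffices.\<close>
  define R' where "R' = (if \<exists>r\<in>R. (a, r) \<in> (adj_rel F)\<^sup>* then insert b R else insert a R)"
  have "\<exists>r\<in>R'. (w, r) \<in> (adj_rel F)\<^sup>*" if "w \<in> W" for w
  proof -
    obtain r where r: "r \<in> R" "(w, r) \<in> (adj_rel F \<union> {(a, b), (b, a)})\<^sup>*"
      using insert.prems(3) \<open>w \<in> W\<close> reach by blast
    obtain r' where r': "r' \<in> R" "(b, r') \<in> (adj_rel F \<union> {(a, b), (b, a)})\<^sup>*"
      using insert.prems(3) e(4) reach by blast
    show ?thesis
      using rtrancl_Un_sym_pair_reaches_endpoint[OF r(2)]
        rtrancl_Un_sym_pair_from_endpoint[OF r'(2)] r(1) r'(1)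
      unfolding R'_def by (auto intro: rtrancl_trans)
  qed
  moreover have "R' \<subseteq> W" "card R' \<le> card R + 1"
    using insert.prems(2) e(3,4) finite_R unfolding R'_def by (auto simp: card_insert_if)
  ultimately have "card W \<le> card F + card R'"
    using insert.IH[OF simple] by blast
  then show ?case using \<open>card R' \<le> card R + 1\<close> insert.hyps by simp
qed

lemma connected_card_vertices_le_Suc_edges:
  assumes "simple_graph W F" "connected_graph W F"
  shows "card W \<le> card F + 1"
proof -
  obtain x where "x \<in> W" using assms(2) unfolding connected_graph_def by auto
  then show ?thesis
    using card_vertices_le_edges_plus_roots[OF assms(1), of "{x}"] assms(2)
    unfolding connected_graph_def by auto
qed

lemma connected_graph_star:
  assumes "c \<in> X" "\<forall>x\<in>X. x \<noteq> c \<longrightarrow> {c, x} \<in> F"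
  shows "connected_graph X F"
proof -
  have "(x, c) \<in> (adj_rel F)\<^sup>* \<and> (c, x) \<in> (adj_rel F)\<^sup>*" if "x \<in> X" for x
  proof (cases "x = c")
    case False
    then have "(x, c) \<in> adj_rel F \<and> (c, x) \<in> adj_rel F"
      using assms(2) that unfolding adj_rel_def by (auto simp: insert_commute)
    then show ?thesis by auto
  qed simp
  then show ?thesis
    using assms(1) unfolding connected_graph_def by (blast intro: rtrancl_trans)
qed

lemma connected_induced_star:
  assumes "c \<in> X" "\<forall>x\<in>X. x \<noteq> c \<longrightarrow> {c, x} \<in> E"
  shows "connected_graph X (induced_edges E X)"
  using assms by (intro connected_graph_star[of c]) (auto simp: induced_edges_def)

lemma clique_good_block_candidate:
  assumes "X \<subseteq> V" "X \<noteq> {}" "is_clique E X"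
  shows "good_block_candidate V E X"
proof -
  have connected: "connected_graph Y (induced_edges E Y)" if "Y \<subseteq> X" "Y \<noteq> {}" for Y
  proof -
    obtain c where "c \<in> Y" using \<open>Y \<noteq> {}\<close> by blast
    moreover have "\<forall>x\<in>Y. x \<noteq> c \<longrightarrow> {c, x} \<in> E"
      using \<open>c \<in> Y\<close> assms(3) that(1) unfolding is_clique_def by (simp add: subset_iff)
    ultimately show ?thesis by (rule connected_induced_star)
  qed
  have "X - {v} = {} \<or> connected_graph (X - {v}) (induced_edges E (X - {v}))" for v
    using connected[of "X - {v}"] by blast
  then show ?thesis
    using assms(1,2) connected[of X] unfolding good_block_candidate_def no_cut_vertex_def by simp
qed

lemma block_subset: "B \<in> blocks V E \<Longrightarrow> B \<subseteq> V"
  unfolding blocks_def good_block_candidate_def by blast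

lemma block_maximal:
  "B \<in> blocks V E \<Longrightarrow> good_block_candidate V E B' \<Longrightarrow> B \<subseteq> B' \<Longrightarrow> B' = B"
  unfolding blocks_def by blast

lemma finite_blocks: "finite V \<Longrightarrow> finite (blocks V E)"
  by (rule finite_subset[of _ "Pow V"]) (auto dest: block_subset)

lemma good_block_candidate_in_block:
  assumes "finite V" "good_block_candidate V E C"
  shows "\<exists>B\<in>blocks V E. C \<subseteq> B"
proof -
  define Q where "Q = {B. good_block_candidate V E B \<and> C \<subseteq> B}"
  have "Q \<subseteq> Pow V" unfolding Q_def good_block_candidate_def by blast
  then have "finite Q" using assms(1) by (auto intro: finite_subset)
  moreover have "C \<in> Q" using assms(2) unfolding Q_def by simp
  ultimately obtain B where "B \<in> Q" "\<forall>B'\<in>Q. B \<subseteq> B' \<longrightarrow> B = B'"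
    using finite_has_maximal by (metis empty_iff)
  then have "good_block_candidate V E B" "C \<subseteq> B"
    and "\<forall>B'. good_block_candidate V E B' \<and> B \<subseteq> B' \<longrightarrow> B' = B"
    unfolding Q_def by (auto intro: subset_trans)
  then have "B \<in> blocks V E" "C \<subseteq> B" unfolding blocks_def by simp_all
  then show ?thesis by blast
qed

lemma finite_connected_subgraph_sizes:
  "finite E \<Longrightarrow> finite {card F | W F. is_subgraph W F V E \<and> connected_graph W F \<and> S \<subseteq> W}"
  by (rule finite_subset[of _ "card ` Pow E"]) (auto simp: is_subgraph_def)

lemma steiner_dist_le:
  assumes "finite E" "is_subgraph W F V E" "connected_graph W F" "S \<subseteq> W"
  shows "steiner_dist V E S \<le> card F"
  unfolding steiner_dist_def
  using assms by (intro Min_le finite_connected_subgraph_sizes) auto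

lemma steiner_dist_attained:
  assumes "simple_graph V E" "connected_graph V E" "S \<subseteq> V"
  obtains W F where "is_subgraph W F V E" "connected_graph W F" "S \<subseteq> W"
    "card F = steiner_dist V E S"
proof -
  let ?D = "{card F | W F. is_subgraph W F V E \<and> connected_graph W F \<and> S \<subseteq> W}"
  have "finite ?D"
    using simple_graph_finite_edges[OF assms(1)] by (rule finite_connected_subgraph_sizes)
  moreover have "is_subgraph V E V E" using assms(1) unfolding simple_graph_def is_subgraph_def by auto
  then have "?D \<noteq> {}" using assms(2,3) by blast
  ultimately have "steiner_dist V E S \<in> ?D" unfolding steiner_dist_def by (rule Min_in)
  then show ?thesis using that by auto
qed

lemma card_le_Suc_steiner_dist:
  assumes "simple_graph V E" "connected_graph V E" "S \<subseteq> V"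
  shows "card S \<le> steiner_dist V E S + 1"
proof -
  obtain W F where WF: "is_subgraph W F V E" "connected_graph W F" "S \<subseteq> W"
    "card F = steiner_dist V E S"
    using steiner_dist_attained[OF assms] .
  have "simple_graph W F" using simple_graph_subgraph[OF assms(1) WF(1)] .
  then have "card S \<le> card W"
    using WF(3) by (intro card_mono) (simp_all add: simple_graph_def)
  also have "\<dots> \<le> card F + 1"
    using connected_card_vertices_le_Suc_edges[OF \<open>simple_graph W F\<close> WF(2)] .
  finally show ?thesis using WF(4) by simp
qed

text \<open>If the bound above is attained, an optimal subgraph spans exactly S.\<close>

lemma steiner_dist_tight_imp_connected_induced:
  assumes "simple_graph V E" "connected_graph V E" "S \<subseteq> V"
    and "steiner_dist V E S + 1 \<le> card S"
  shows "connected_graph S (induced_edges E S)"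
proof -
  obtain W F where WF: "is_subgraph W F V E" "connected_graph W F" "S \<subseteq> W"
    "card F = steiner_dist V E S"
    using steiner_dist_attained[OF assms(1-3)] .
  have simple_WF: "simple_graph W F" using simple_graph_subgraph[OF assms(1) WF(1)] .
  then have "card W \<le> card S"
    using connected_card_vertices_le_Suc_edges[OF simple_WF WF(2)] WF(4) assms(4) by simp
  then have "W = S"
    using WF(3) simple_WF by (intro card_seteq[symmetric]) (simp_all add: simple_graph_def)
  then have "F \<subseteq> induced_edges E S"
    using WF(1) unfolding is_subgraph_def induced_edges_def by auto
  then show ?thesis using connected_graph_mono WF(2) \<open>W = S\<close> by blast
qed

lemma steiner_dist_star_le:
  assumes "simple_graph V E" "T \<subseteq> V" "c \<in> T" "\<forall>t\<in>T. t \<noteq> c \<longrightarrow> {c, t} \<in> E" "S \<subseteq> T"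
  shows "steiner_dist V E S \<le> card T - 1"
proof -
  define F where "F = (\<lambda>t. {c, t}) ` (T - {c})"
  have "inj_on (\<lambda>t. {c, t}) (T - {c})"
    by (rule inj_onI) (auto simp: doubleton_eq_iff)
  then have "card F = card T - 1"
    unfolding F_def using assms(3) by (simp add: card_image)
  moreover have "is_subgraph T F V E" "connected_graph T F"
    using assms(2-4) unfolding F_def is_subgraph_def by (auto intro: connected_graph_star)
  ultimately show ?thesis
    using steiner_dist_le[OF simple_graph_finite_edges[OF assms(1)]] assms(5) by metis
qed

lemma pred_mult_choose_pred:
  assumes "1 \<le> n" "1 \<le> k"
  shows "(n - 1) * ((n - 1) choose (k - 1)) = (k - 1) * (n choose k) + ((n - 1) choose k)"
proof -
  obtain m where m: "n = Suc m" using assms(1) by (cases n) auto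
  obtain j where j: "k = Suc j" using assms(2) by (cases k) auto
  have "Suc m * (m choose j) = (Suc m choose Suc j) * Suc j"
    by (rule Suc_times_binomial_eq)
  then have "m * (m choose j) + (m choose j) = j * (Suc m choose Suc j) + (Suc m choose Suc j)"
    by (simp add: algebra_simps)
  then have "m * (m choose j) = j * (Suc m choose Suc j) + (m choose Suc j)"
    using binomial_Suc_Suc[of m j] by linarith
  then show ?thesis using m j by simp
qed

locale universal_vertex_graph =
  fixes V :: "'a set" and E :: "'a set set" and u :: 'a
  assumes simple: "simple_graph V E"
    and universal_in: "u \<in> V"
    and universal: "\<forall>v\<in>V. v \<noteq> u \<longrightarrow> {u, v} \<in> E"
begin

lemma finite_vertices: "finite V"
  using simple unfolding simple_graph_def by simp

lemma connected_induced_universal: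
  "u \<in> X \<Longrightarrow> X \<subseteq> V \<Longrightarrow> connected_graph X (induced_edges E X)"
  using universal by (intro connected_induced_star[of u]) auto

lemma graph_connected: "connected_graph V E"
proof -
  have "induced_edges E V \<subseteq> E" unfolding induced_edges_def by blast
  then show ?thesis
    using connected_induced_universal[OF universal_in] connected_graph_mono by blast
qed

lemma good_block_candidate_insert_universal:
  assumes "X \<subseteq> V" "u \<notin> X" "connected_graph X (induced_edges E X)"
  shows "good_block_candidate V E (insert u X)"
proof -
  have "insert u X - {v} = {} \<or>
      connected_graph (insert u X - {v}) (induced_edges E (insert u X - {v}))" for v
  proof (cases "v = u")
    case True
    then show ?thesis using assms(2,3) by simp
  next
    case False
    then show ?thesis using assms(1) universal_in by (intro disjI2 connected_induced_universal) auto
  qed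
  then show ?thesis
    using assms(1) universal_in connected_induced_universal[of "insert u X"]
    unfolding good_block_candidate_def no_cut_vertex_def by simp
qed

lemma clique_block_contains_universal:
  assumes "B \<in> blocks V E" "is_clique E B"
  shows "u \<in> B"
proof -
  have "is_clique E (insert u B)"
    using assms block_subset[OF assms(1)] universal unfolding is_clique_def
    by (auto simp: insert_commute)
  then have "good_block_candidate V E (insert u B)"
    using block_subset[OF assms(1)] universal_in by (intro clique_good_block_candidate) auto
  then have "insert u B = B" using block_maximal[OF assms(1)] by blast
  then show ?thesis by blast
qed

end

locale star_like_block_graph_at = universal_vertex_graph +
  assumes blocks_clique: "\<forall>B\<in>blocks V E. is_clique E B"
begin

lemma universal_in_block: "B \<in> blocks V E \<Longrightarrow> u \<in> B"
  using blocks_clique clique_block_contains_universal by blast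

lemma block_eq_if_common_vertex:
  assumes B1: "B1 \<in> blocks V E" and B2: "B2 \<in> blocks V E"
    and s: "s \<in> B1" "s \<in> B2" "s \<noteq> u"
  shows "B1 = B2"
proof -
  let ?X = "B1 \<union> B2 - {u}"
  have "{s, x} \<in> E" if "x \<in> ?X" "x \<noteq> s" for x
  proof -
    have "x \<in> B1 \<or> x \<in> B2" using that by blast
    then show ?thesis
      using blocks_clique B1 B2 s(1,2) \<open>x \<noteq> s\<close> unfolding is_clique_def by metis
  qed
  then have "connected_graph ?X (induced_edges E ?X)"
    using s by (intro connected_induced_star[of s]) simp_all
  then have "good_block_candidate V E (insert u ?X)"
    using block_subset[OF B1] block_subset[OF B2]
    by (intro good_block_candidate_insert_universal) auto
  moreover have "insert u ?X = B1 \<union> B2" using universal_in_block[OF B1] by blast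
  ultimately have "B1 \<union> B2 = B1" "B1 \<union> B2 = B2"
    using block_maximal[OF B1] block_maximal[OF B2] by (metis Un_upper1, metis Un_upper2)
  then show ?thesis by blast
qed

text \<open>The sets S whose Steiner distance is card S rather than card S - 1.\<close>

definition spread :: "'a set \<Rightarrow> bool" where
  "spread S \<longleftrightarrow> u \<notin> S \<and> (\<forall>B\<in>blocks V E. \<not> S \<subseteq> B)"

lemma steiner_dist_eq:
  assumes "S \<subseteq> V" "S \<noteq> {}"
  shows "steiner_dist V E S = (if spread S then card S else card S - 1)"
proof -
  have lower: "card S \<le> steiner_dist V E S + 1"
    using card_le_Suc_steiner_dist[OF simple graph_connected assms(1)] .
  have finite_S: "finite S" using assms(1) finite_vertices finite_subset by blast
  consider "u \<in> S" | B where "B \<in> blocks V E" "S \<subseteq> B" | "spread S"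
    unfolding spread_def by blast
  then show ?thesis
  proof cases
    case 1
    then have "steiner_dist V E S \<le> card S - 1"
      using universal assms(1) by (intro steiner_dist_star_le[OF simple]) auto
    moreover have "\<not> spread S" using 1 unfolding spread_def by simp
    ultimately show ?thesis using lower by simp
  next
    case 2
    obtain c where "c \<in> S" using assms(2) by blast
    moreover have "is_clique E B" using blocks_clique 2(1) by blast
    ultimately have "\<forall>t\<in>S. t \<noteq> c \<longrightarrow> {c, t} \<in> E"
      using 2(2) unfolding is_clique_def by (simp add: subset_iff)
    then have "steiner_dist V E S \<le> card S - 1"
      using \<open>c \<in> S\<close> assms(1) by (intro steiner_dist_star_le[OF simple]) auto
    moreover have "\<not> spread S" using 2 unfolding spread_def by blast
    ultimately show ?thesis using lower by simp
  next
    case 3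
    have "steiner_dist V E S \<le> card (insert u S) - 1"
      using universal universal_in assms(1) by (intro steiner_dist_star_le[OF simple]) auto
    then have upper: "steiner_dist V E S \<le> card S"
      using finite_S 3 unfolding spread_def by simp
    have "\<not> steiner_dist V E S + 1 \<le> card S"
    proof
      assume "steiner_dist V E S + 1 \<le> card S"
      then have "connected_graph S (induced_edges E S)"
        by (rule steiner_dist_tight_imp_connected_induced[OF simple graph_connected assms(1)])
      then have "good_block_candidate V E (insert u S)"
        using assms(1) 3 unfolding spread_def by (intro good_block_candidate_insert_universal) auto
      then obtain B where "B \<in> blocks V E" "insert u S \<subseteq> B"
        using good_block_candidate_in_block[OF finite_vertices] by blast
      then show False using 3 unfolding spread_def by simp
    qed
    then show ?thesis using upper 3 by simp
  qed
qed

lemma avoiding_universal_subsets_split: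
  "{S. S \<subseteq> V - {u} \<and> card S = k} =
     {S. S \<subseteq> V \<and> card S = k \<and> spread S} \<union> (\<Union>B\<in>blocks V E. {S. S \<subseteq> B - {u} \<and> card S = k})"
proof (intro set_eqI iffI)
  fix S assume S: "S \<in> {S. S \<subseteq> V - {u} \<and> card S = k}"
  show "S \<in> {S. S \<subseteq> V \<and> card S = k \<and> spread S} \<union> (\<Union>B\<in>blocks V E. {S. S \<subseteq> B - {u} \<and> card S = k})"
  proof (cases "spread S")
    case False
    then obtain B where "B \<in> blocks V E" "S \<subseteq> B" using S unfolding spread_def by blast
    then show ?thesis using S by blast
  qed (use S in blast)
next
  fix S assume "S \<in> {S. S \<subseteq> V \<and> card S = k \<and> spread S} \<union> (\<Union>B\<in>blocks V E. {S. S \<subseteq> B - {u} \<and> card S = k})"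
  then consider "S \<subseteq> V" "card S = k" "spread S" | B where "B \<in> blocks V E" "S \<subseteq> B - {u}" "card S = k"
    by blast
  then show "S \<in> {S. S \<subseteq> V - {u} \<and> card S = k}"
  proof cases
    case 1
    then show ?thesis unfolding spread_def by blast
  next
    case 2
    then show ?thesis using block_subset[OF 2(1)] by blast
  qed
qed

lemma finite_block: "B \<in> blocks V E \<Longrightarrow> finite B"
  using finite_subset[OF block_subset finite_vertices] .

lemma card_subsets_inside_blocks:
  assumes "0 < k"
  shows "card (\<Union>B\<in>blocks V E. {S. S \<subseteq> B - {u} \<and> card S = k})
    = (\<Sum>B\<in>blocks V E. (card B - 1) choose k)"
proof -
  let ?inside = "\<lambda>B. {S. S \<subseteq> B - {u} \<and> card S = k}"
  have inside_disjoint: "?inside B1 \<inter> ?inside B2 = {}"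
    if "B1 \<in> blocks V E" "B2 \<in> blocks V E" "B1 \<noteq> B2" for B1 B2
  proof (rule ccontr)
    assume "?inside B1 \<inter> ?inside B2 \<noteq> {}"
    then obtain S where S: "S \<subseteq> B1 - {u}" "S \<subseteq> B2 - {u}" "card S = k" by blast
    then have "S \<noteq> {}" using assms by auto
    then obtain s where "s \<in> S" by blast
    then have "s \<in> B1" "s \<in> B2" "s \<noteq> u" using S(1,2) by auto
    then show False using block_eq_if_common_vertex[OF that(1,2)] that(3) by simp
  qed
  have "finite (?inside B)" if "B \<in> blocks V E" for B
    by (rule finite_subset[of _ "Pow B"]) (auto simp: finite_block[OF that])
  then have "card (\<Union>B\<in>blocks V E. ?inside B) = (\<Sum>B\<in>blocks V E. card (?inside B))"
    using inside_disjoint by (intro card_UN_disjoint finite_blocks finite_vertices) auto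
  also have "\<dots> = (\<Sum>B\<in>blocks V E. (card B - 1) choose k)"
  proof (rule sum.cong[OF refl])
    fix B assume "B \<in> blocks V E"
    then show "card (?inside B) = (card B - 1) choose k"
      using n_subsets[of "B - {u}" k] finite_block universal_in_block by simp
  qed
  finally show ?thesis .
qed

lemma card_spread_subsets:
  assumes "0 < k"
  shows "card {S. S \<subseteq> V \<and> card S = k \<and> spread S} + (\<Sum>B\<in>blocks V E. (card B - 1) choose k)
    = (card V - 1) choose k"
proof -
  let ?spread = "{S. S \<subseteq> V \<and> card S = k \<and> spread S}"
  let ?inside = "\<Union>B\<in>blocks V E. {S. S \<subseteq> B - {u} \<and> card S = k}"
  have "\<not> spread S" if "B \<in> blocks V E" "S \<subseteq> B - {u}" for B S
  proof -
    have "S \<subseteq> B" using that(2) by blast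
    then show ?thesis using that(1) unfolding spread_def by blast
  qed
  then have disjoint: "?spread \<inter> ?inside = {}" by auto
  have "finite ?spread"
    by (rule finite_subset[of _ "Pow V"]) (auto simp: finite_vertices)
  moreover have "finite ?inside"
    using finite_blocks[OF finite_vertices] finite_block by auto
  ultimately have "card (?spread \<union> ?inside) = card ?spread + card ?inside"
    using disjoint by (rule card_Un_disjoint)
  then have "card ?spread + (\<Sum>B\<in>blocks V E. (card B - 1) choose k) = card (?spread \<union> ?inside)"
    using card_subsets_inside_blocks[OF assms] by simp
  also have "?spread \<union> ?inside = {S. S \<subseteq> V - {u} \<and> card S = k}"
    by (rule avoiding_universal_subsets_split[symmetric])
  also have "card \<dots> = (card V - 1) choose k"
    using n_subsets[of "V - {u}" k] finite_vertices universal_in by simp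
  finally show ?thesis .
qed

lemma steiner_wiener_eq:
  assumes "0 < k"
  shows "steiner_wiener k V E
    = (k - 1) * (card V choose k) + card {S. S \<subseteq> V \<and> card S = k \<and> spread S}"
proof -
  let ?subsets = "{S. S \<subseteq> V \<and> card S = k}"
  have finite_subsets: "finite ?subsets"
    by (rule finite_subset[of _ "Pow V"]) (auto simp: finite_vertices)
  have "steiner_wiener k V E = (\<Sum>S\<in>?subsets. (k - 1) + (if spread S then 1 else 0))"
    unfolding steiner_wiener_def
  proof (rule sum.cong)
    fix S assume "S \<in> ?subsets"
    then have "S \<subseteq> V" "card S = k" by auto
    moreover from this have "S \<noteq> {}" using assms by auto
    ultimately show "steiner_dist V E S = (k - 1) + (if spread S then 1 else 0)"
      using assms by (simp add: steiner_dist_eq)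
  qed simp
  also have "\<dots> = (k - 1) * card ?subsets + (\<Sum>S\<in>?subsets. if spread S then 1 else 0)"
    by (simp add: sum.distrib)
  also have "(\<Sum>S\<in>?subsets. if spread S then 1 else 0) = card {S \<in> ?subsets. spread S}"
    using finite_subsets by (simp add: sum.If_cases Int_def)
  also have "{S \<in> ?subsets. spread S} = {S. S \<subseteq> V \<and> card S = k \<and> spread S}"
    by auto
  also have "card ?subsets = card V choose k"
    using n_subsets[OF finite_vertices] .
  finally show ?thesis .
qed

end

theorem mainTheorem6:
  fixes V :: "'a set" and E :: "'a set set" and k :: nat
  assumes "star_like_block_graph V E"
    and "2 \<le> k" and "k \<le> card V"
  shows "int (steiner_wiener k V E) =
     int ((card V - 1) * ((card V - 1) choose (k - 1)))
     - (\<Sum>B\<in>blocks V E. int ((card B - 1) choose k))"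
proof -
  obtain u where "u \<in> V" "\<forall>v\<in>V. v \<noteq> u \<longrightarrow> {u, v} \<in> E"
    using assms(1) unfolding star_like_block_graph_def by blast
  then interpret star_like_block_graph_at V E u
    using assms(1) unfolding star_like_block_graph_def block_graph_def by unfold_locales auto
  define spread_count where "spread_count = card {S. S \<subseteq> V \<and> card S = k \<and> spread S}"
  have "steiner_wiener k V E = (k - 1) * (card V choose k) + spread_count"
    using steiner_wiener_eq assms(2) unfolding spread_count_def by simp
  moreover have "spread_count + (\<Sum>B\<in>blocks V E. (card B - 1) choose k) = (card V - 1) choose k"
    using card_spread_subsets assms(2) unfolding spread_count_def by simp
  moreover have "(card V - 1) * ((card V - 1) choose (k - 1))
      = (k - 1) * (card V choose k) + ((card V - 1) choose k)"
    using pred_mult_choose_pred assms(2,3) by simp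
  ultimately have "steiner_wiener k V E + (\<Sum>B\<in>blocks V E. (card B - 1) choose k)
      = (card V - 1) * ((card V - 1) choose (k - 1))"
    by simp
  then have "int (steiner_wiener k V E) + (\<Sum>B\<in>blocks V E. int ((card B - 1) choose k))
      = int ((card V - 1) * ((card V - 1) choose (k - 1)))"
    by (simp only: of_nat_sum[symmetric] of_nat_add[symmetric])
  then show ?thesis by simp
qed

end
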